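(* Let $r\ge 10$ be an even integer, let $k\ge 1$, and let $Q\subseteq\mathrm{VE}(G_k)$ be such that $\mu_1\notin\mathrm{VE}(G_{2r+1}(\mu_2))$ for all distinct $\mu_1,\mu_2\in Q$. Then for every $\mu\in\mathrm{VE}(G_k)$, \[ \bigl|\{\mu_1\in Q:\mu\in\mathrm{VE}(G_{3r+1}(\mu_1))\}\bigr|\le 16. \]
   Context: The grid $G_k$ has vertex set $\{1,\dots,k\}^2$, with $(i_1,j_1)$ and $(i_2,j_2)$ adjacent iff $|i_1-i_2|+|j_1-j_2|=1$. For a graph $H$, $\mathrm{VE}(H):=V(H)\cup E(H)$. For a vertex $v=(i,j)$ of $G_k$ and integer $s\ge 0$, $B_s(v):=(\{i-s,\dots,i+s\}\times\{j-s,\dots,j+s\})\cap V(G_k)$; for an edge $vw$ of $G_k$, $B_s(vw):=B_s(v)\cup B_s(w)$; and $G_s(\mu):=G_k[B_s(\mu)]$ is the induced subgraph, for $\mu\in\mathrm{VE}(G_k)$. *)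

theory Defs
  imports Main
begin

type_synonym vtx = "int \<times> int"

text \<open>Elements of VE(H): either a vertex or an edge (an unordered pair of vertices).\<close>
datatype ve = Vx vtx | Ed "vtx set"

definition grid_V :: "nat \<Rightarrow> vtx set" where
  "grid_V k = {1..int k} \<times> {1..int k}"

definition adj :: "vtx \<Rightarrow> vtx \<Rightarrow> bool" where
  "adj v w \<longleftrightarrow> \<bar>fst v - fst w\<bar> + \<bar>snd v - snd w\<bar> = 1"

definition grid_E_on :: "nat \<Rightarrow> vtx set \<Rightarrow> vtx set set" where
  "grid_E_on k S = {{v, w} | v w. v \<in> S \<inter> grid_V k \<and> w \<in> S \<inter> grid_V k \<and> adj v w}"

definition VE_on :: "nat \<Rightarrow> vtx set \<Rightarrow> ve set" where
  "VE_on k S = Vx ` (S \<inter> grid_V k) \<union> Ed ` grid_E_on k S"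

definition VE_grid :: "nat \<Rightarrow> ve set" where
  "VE_grid k = VE_on k (grid_V k)"

definition ball_v :: "nat \<Rightarrow> nat \<Rightarrow> vtx \<Rightarrow> vtx set" where
  "ball_v k s v = ({fst v - int s..fst v + int s} \<times> {snd v - int s..snd v + int s}) \<inter> grid_V k"

fun ball_ve :: "nat \<Rightarrow> nat \<Rightarrow> ve \<Rightarrow> vtx set" where
  "ball_ve k s (Vx v) = ball_v k s v"
| "ball_ve k s (Ed e) = (\<Union>v\<in>e. ball_v k s v)"

definition VE_G :: "nat \<Rightarrow> nat \<Rightarrow> ve \<Rightarrow> ve set" where
  "VE_G k s \<mu> = VE_on k (ball_ve k s \<mu>)"

end

theory Submission
  imports Defs
begin

(* Anchor every element of VE(G_k) at one of its (at most two, adjacent) vertices. Distinct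
   elements of Q are (2r+1)-separated, so their anchors are at Chebyshev distance at least 2r+1;
   elements whose (3r+1)-ball contains mu have anchors within 3r+2 of the anchor of mu. Cutting the
   box of radius 3r+2 around that anchor into 4 x 4 blocks of side 2r+1 leaves at most one anchor
   per block. *)

definition cheb_dist :: "vtx \<Rightarrow> vtx \<Rightarrow> int" where
  "cheb_dist a b = max \<bar>fst a - fst b\<bar> \<bar>snd a - snd b\<bar>"

lemma cheb_dist_triangle: "cheb_dist a c \<le> cheb_dist a b + cheb_dist b c"
  unfolding cheb_dist_def by auto

fun ve_vertices :: "ve \<Rightarrow> vtx set" where
  "ve_vertices (Vx v) = {v}"
| "ve_vertices (Ed e) = e"

definition anchor :: "ve \<Rightarrow> vtx" where
  "anchor m = (SOME v. v \<in> ve_vertices m)"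

lemma VE_grid_vertices:
  assumes "m \<in> VE_grid k"
  shows "ve_vertices m \<noteq> {}" and "ve_vertices m \<subseteq> grid_V k"
    and "\<And>a b. a \<in> ve_vertices m \<Longrightarrow> b \<in> ve_vertices m \<Longrightarrow> cheb_dist a b \<le> 1"
  using assms unfolding VE_grid_def VE_on_def grid_E_on_def
  by (auto simp: cheb_dist_def adj_def)

lemma anchor_in_vertices: "m \<in> VE_grid k \<Longrightarrow> anchor m \<in> ve_vertices m"
  unfolding anchor_def using VE_grid_vertices(1) by (meson ex_in_conv someI_ex)

lemma cheb_dist_anchor_le_1:
  "m \<in> VE_grid k \<Longrightarrow> a \<in> ve_vertices m \<Longrightarrow> cheb_dist a (anchor m) \<le> 1"
  using VE_grid_vertices(3) anchor_in_vertices by blast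

lemma VE_grid_mem_VE_on_iff:
  assumes "m \<in> VE_grid k"
  shows "m \<in> VE_on k S \<longleftrightarrow> ve_vertices m \<subseteq> S"
proof (cases m)
  case (Vx v)
  then show ?thesis using assms unfolding VE_grid_def VE_on_def by auto
next
  case (Ed e)
  from assms Ed obtain v w where e: "e = {v, w}" "v \<in> grid_V k" "w \<in> grid_V k" "adj v w"
    unfolding VE_grid_def VE_on_def grid_E_on_def by auto
  have "m \<in> VE_on k S \<longleftrightarrow> e \<in> grid_E_on k S"
    using Ed unfolding VE_on_def by auto
  also have "\<dots> \<longleftrightarrow> e \<subseteq> S"
  proof
    show "e \<in> grid_E_on k S \<Longrightarrow> e \<subseteq> S"
      unfolding grid_E_on_def by auto
    show "e \<subseteq> S \<Longrightarrow> e \<in> grid_E_on k S"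
      using e unfolding grid_E_on_def by blast
  qed
  finally show ?thesis using Ed by simp
qed

lemma mem_ball_v_iff: "y \<in> ball_v k s v \<longleftrightarrow> y \<in> grid_V k \<and> cheb_dist y v \<le> int s"
  by (cases y; cases v) (auto simp: ball_v_def cheb_dist_def)

lemma mem_ball_ve_iff:
  "y \<in> ball_ve k s m \<longleftrightarrow> y \<in> grid_V k \<and> (\<exists>v\<in>ve_vertices m. cheb_dist y v \<le> int s)"
  by (cases m) (auto simp: mem_ball_v_iff)

lemma not_in_VE_G_imp_anchor_dist_ge:
  assumes "m1 \<in> VE_grid k" "m2 \<in> VE_grid k" "m1 \<notin> VE_G k s m2"
  shows "int s \<le> cheb_dist (anchor m1) (anchor m2)"
proof -
  obtain a where a: "a \<in> ve_vertices m1" "a \<notin> ball_ve k s m2"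
    using assms VE_grid_mem_VE_on_iff unfolding VE_G_def by blast
  have "a \<in> grid_V k" using a(1) VE_grid_vertices(2)[OF assms(1)] by blast
  then have "int s < cheb_dist a (anchor m2)"
    using a(2) anchor_in_vertices[OF assms(2)] mem_ball_ve_iff by fastforce
  also have "\<dots> \<le> cheb_dist a (anchor m1) + cheb_dist (anchor m1) (anchor m2)"
    by (rule cheb_dist_triangle)
  finally show ?thesis
    using cheb_dist_anchor_le_1[OF assms(1) a(1)] by linarith
qed

lemma in_VE_G_imp_anchor_dist_le:
  assumes "m \<in> VE_grid k" "m1 \<in> VE_grid k" "m \<in> VE_G k s m1"
  shows "cheb_dist (anchor m) (anchor m1) \<le> int s + 1"
proof -
  have "anchor m \<in> ball_ve k s m1"
    using assms anchor_in_vertices VE_grid_mem_VE_on_iff unfolding VE_G_def by blast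
  then obtain v where v: "v \<in> ve_vertices m1" "cheb_dist (anchor m) v \<le> int s"
    using mem_ball_ve_iff by blast
  have "cheb_dist (anchor m) (anchor m1) \<le> cheb_dist (anchor m) v + cheb_dist v (anchor m1)"
    by (rule cheb_dist_triangle)
  then show ?thesis
    using v cheb_dist_anchor_le_1[OF assms(2) v(1)] by linarith
qed

lemma abs_diff_less_if_div_eq:
  fixes a b d :: int
  assumes "0 < d" "a div d = b div d"
  shows "\<bar>a - b\<bar> < d"
proof -
  have "a - b = a mod d - b mod d"
    using div_mult_mod_eq[of a d] div_mult_mod_eq[of b d] unfolding assms(2) by linarith
  moreover have "0 \<le> a mod d" "a mod d < d" "0 \<le> b mod d" "b mod d < d"
    using assms(1) by simp_all
  ultimately show ?thesis by linarith
qed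

lemma div_mem_atLeastLessThan:
  fixes a d n :: int
  assumes "0 < d" "0 \<le> a" "a < n * d"
  shows "a div d \<in> {0..<n}"
proof -
  have "a div d * d \<le> a"
    using div_mult_mod_eq[of a d] pos_mod_sign[OF assms(1), of a] by linarith
  then have "a div d * d < n * d"
    using assms(3) by linarith
  then have "a div d < n"
    using assms(1) by simp
  then show ?thesis
    using assms(1,2) by (simp add: pos_imp_zdiv_nonneg_iff)
qed

lemma card_le_if_separated_in_box:
  fixes A :: "'a set" and p :: "'a \<Rightarrow> vtx" and c :: vtx and d R :: int and n :: nat
  assumes "0 < d" "2 * R < int n * d"
    and near: "\<And>a. a \<in> A \<Longrightarrow> cheb_dist c (p a) \<le> R"
    and separated: "\<And>a b. a \<in> A \<Longrightarrow> b \<in> A \<Longrightarrow> a \<noteq> b \<Longrightarrow> d \<le> cheb_dist (p a) (p b)"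
  shows "card A \<le> n * n"
proof -
  define block where "block = (\<lambda>a. ((fst (p a) - fst c + R) div d, (snd (p a) - snd c + R) div d))"
  have "inj_on block A"
  proof (rule inj_onI, rule ccontr)
    fix a b assume ab: "a \<in> A" "b \<in> A" "block a = block b" "a \<noteq> b"
    have "\<bar>(fst (p a) - fst c + R) - (fst (p b) - fst c + R)\<bar> < d"
      by (rule abs_diff_less_if_div_eq[OF assms(1)]) (use ab(3) in \<open>simp add: block_def\<close>)
    moreover have "\<bar>(snd (p a) - snd c + R) - (snd (p b) - snd c + R)\<bar> < d"
      by (rule abs_diff_less_if_div_eq[OF assms(1)]) (use ab(3) in \<open>simp add: block_def\<close>)
    ultimately show False
      using separated[OF ab(1,2,4)] unfolding cheb_dist_def by auto
  qed
  moreover have "block ` A \<subseteq> {0..<int n} \<times> {0..<int n}"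
  proof -
    have block_index: "(x + R) div d \<in> {0..<int n}" if "\<bar>x\<bar> \<le> R" for x
      by (rule div_mem_atLeastLessThan[OF assms(1)]) (use that assms(2) in \<open>auto simp: mult.commute\<close>)
    show ?thesis
      using block_index near unfolding block_def cheb_dist_def
      by (auto simp: abs_minus_commute)
  qed
  ultimately have "card A \<le> card ({0..<int n} \<times> {0..<int n})"
    by (intro card_inj_on_le) auto
  then show ?thesis by (simp add: card_cartesian_product)
qed

theorem lemma13:
  fixes r k :: nat and Q :: "ve set" and \<mu> :: ve
  assumes "r \<ge> 10" and "even r" and "k \<ge> 1"
    and "Q \<subseteq> VE_grid k"
    and "\<forall>\<mu>1\<in>Q. \<forall>\<mu>2\<in>Q. \<mu>1 \<noteq> \<mu>2 \<longrightarrow> \<mu>1 \<notin> VE_G k (2*r+1) \<mu>2"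
    and "\<mu> \<in> VE_grid k"
  shows "card {\<mu>1 \<in> Q. \<mu> \<in> VE_G k (3*r+1) \<mu>1} \<le> 16"
proof -
  let ?A = "{\<mu>1 \<in> Q. \<mu> \<in> VE_G k (3*r+1) \<mu>1}"
  have "card ?A \<le> 4 * 4"
  proof (rule card_le_if_separated_in_box[where p = anchor and c = "anchor \<mu>"])
    show "0 < int (2*r+1)" by simp
    show "2 * int (3*r+2) < int 4 * int (2*r+1)" using assms(1) by simp
    show "cheb_dist (anchor \<mu>) (anchor m) \<le> int (3*r+2)" if "m \<in> ?A" for m
      using in_VE_G_imp_anchor_dist_le[OF assms(6)] that assms(4) by fastforce
    show "int (2*r+1) \<le> cheb_dist (anchor m1) (anchor m2)"
      if "m1 \<in> ?A" "m2 \<in> ?A" "m1 \<noteq> m2" for m1 m2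
      using not_in_VE_G_imp_anchor_dist_ge that assms(4,5) by blast
  qed
  then show ?thesis by simp
qed

end
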